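(* There is an absolute constant $C>0$ such that the following holds. Let $U^*,S,p_{ijk},\widehat p_{ijk},\mathcal{W}_{ijk},\delta_{ijk}$ be as in the context, and let $U\in\mathbb{R}^{n\times r}$ be a fixed (non-random, or independent of $\delta$) matrix with unit-norm columns satisfying $|U_{il}|\le2\|(U^* )^i\|$ for all $i,l$. Let $\gamma\in(0,1]$, $i\in[n]$ and $q\in[r]$ be fixed. If $m\ge\frac{C}{\gamma^2}n\log(n)S^2$, then with probability at least $1-n^{-10}$, $$\Big|\sum_{j,k}\delta_{ijk}\mathcal{W}_{ijk}U_{jq}U^*_{jq}U_{kq}U^*_{kq}-\langle U_q,U^*_q\rangle^2\Big|\le\gamma .$$
   Context: $U^*\in\mathbb{R}^{n\times r}$ has orthonormal columns $U^*_l$ and rows $(U^* )^i$; $S=\sum_i\|(U^* )^i\|^{3/2}$; $p_{ijk}=\frac{\|(U^* )^i\|^{3/2}\|(U^* )^j\|^{3/2}+\|(U^* )^j\|^{3/2}\|(U^* )^k\|^{3/2}+\|(U^* )^k\|^{3/2}\|(U^* )^i\|^{3/2}}{3nS^2}$; $\widehat p_{ijk}=\min\{mp_{ijk},1\}$; $\mathcal{W}_{ijk}=1/\widehat p_{ijk}$ if $\widehat p_{ijk}>0$, else $0$; $\delta_{ijk}$ are independent Bernoulli$(\widehat p_{ijk})$ random variables. *)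

theory Defs
  imports "HOL-Probability.Probability"
begin

text \<open>Matrices are functions nat => nat => real; row index i < n, column index l < r.\<close>

definition rownorm :: "nat \<Rightarrow> (nat \<Rightarrow> nat \<Rightarrow> real) \<Rightarrow> nat \<Rightarrow> real" where
  "rownorm r Us i = sqrt (\<Sum>l<r. (Us i l)^2)"

definition Ssum :: "nat \<Rightarrow> nat \<Rightarrow> (nat \<Rightarrow> nat \<Rightarrow> real) \<Rightarrow> real" where
  "Ssum n r Us = (\<Sum>i<n. rownorm r Us i powr (3/2))"

definition pprob :: "nat \<Rightarrow> nat \<Rightarrow> (nat \<Rightarrow> nat \<Rightarrow> real) \<Rightarrow> nat \<Rightarrow> nat \<Rightarrow> nat \<Rightarrow> real" where
  "pprob n r Us i j k =
     (rownorm r Us i powr (3/2) * rownorm r Us j powr (3/2)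
      + rownorm r Us j powr (3/2) * rownorm r Us k powr (3/2)
      + rownorm r Us k powr (3/2) * rownorm r Us i powr (3/2))
     / (3 * real n * (Ssum n r Us)^2)"

definition phat :: "real \<Rightarrow> nat \<Rightarrow> nat \<Rightarrow> (nat \<Rightarrow> nat \<Rightarrow> real) \<Rightarrow> nat \<Rightarrow> nat \<Rightarrow> nat \<Rightarrow> real" where
  "phat m n r Us i j k = min (m * pprob n r Us i j k) 1"

definition Wgt :: "real \<Rightarrow> nat \<Rightarrow> nat \<Rightarrow> (nat \<Rightarrow> nat \<Rightarrow> real) \<Rightarrow> nat \<Rightarrow> nat \<Rightarrow> nat \<Rightarrow> real" where
  "Wgt m n r Us i j k = (if phat m n r Us i j k > 0 then 1 / phat m n r Us i j k else 0)"

definition delta_pmf :: "real \<Rightarrow> nat \<Rightarrow> nat \<Rightarrow> (nat \<Rightarrow> nat \<Rightarrow> real) \<Rightarrow> (nat \<times> nat \<times> nat \<Rightarrow> bool) pmf" where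
  "delta_pmf m n r Us = Pi_pmf ({..<n} \<times> {..<n} \<times> {..<n}) False
      (\<lambda>(i,j,k). bernoulli_pmf (phat m n r Us i j k))"

end

theory Submission
  imports Defs
begin

text \<open>
  Only the slice \<open>a = i\<close> of the Bernoulli array enters, so the error of the estimate is a sum
  of independent centred terms \<open>c\<^sub>x (\<delta>\<^sub>x / p\<^sub>x - 1)\<close> with \<open>\<Sum>|c\<^sub>x| \<le> 1\<close>
  (Cauchy--Schwarz for the unit columns \<open>U\<^sub>q\<close>, \<open>U\<^sup>*\<^sub>q\<close>) and
  \<open>|c\<^sub>x| \<le> K p\<^sub>x\<close> whenever \<open>p\<^sub>x < 1\<close>, where \<open>K = 6 n S\<^sup>2 / m\<close>:
  the row bound gives \<open>|U\<^sub>j\<^sub>q U\<^sup>*\<^sub>j\<^sub>q| \<le> \<surd>2 \<parallel>(U\<^sup>*)\<^sup>j\<parallel>\<^sup>3\<^sup>/\<^sup>2\<close>,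
  and the product of two such factors is dominated by one of the three terms of \<open>p\<^sub>i\<^sub>j\<^sub>k\<close>.
  For such sums the moment generating function at \<open>|\<lambda>| \<le> 1/K\<close> is at most \<open>exp (\<lambda>\<^sup>2 K)\<close>,
  so the Chernoff bound gives the tail \<open>2 exp (-\<gamma>\<^sup>2 / (4K))\<close>, which is at most
  \<open>n\<^sup>-\<^sup>1\<^sup>0\<close> once \<open>m \<ge> 264 n log n S\<^sup>2 / \<gamma>\<^sup>2\<close>.
\<close>

lemma exp_le_one_plus_sq:
  fixes x :: real
  assumes "\<bar>x\<bar> \<le> 1"
  shows "exp x \<le> 1 + x + x\<^sup>2"
proof (cases "x \<ge> 0")
  case True
  then show ?thesis using exp_bound[of x] assms by auto
next
  case False
  have pos: "0 < 1 + x + x\<^sup>2"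
    using assms False by (smt (verit) zero_less_power2)
  have "1 \<le> 1 - x ^ 3"
    using False by (simp add: power3_eq_cube mult_nonneg_nonpos)
  also have "\<dots> = (1 - x) * (1 + x + x\<^sup>2)"
    by (simp add: algebra_simps power2_eq_square power3_eq_cube)
  also have "\<dots> \<le> exp (- x) * (1 + x + x\<^sup>2)"
    using pos exp_ge_add_one_self[of "- x"] by (intro mult_right_mono) auto
  finally show ?thesis
    using pos by (simp add: exp_minus field_simps)
qed

lemma bernoulli_reweighted_mgf_le:
  fixes p c K l :: real
  assumes p: "0 \<le> p" "p \<le> 1" and K: "0 \<le> K" and lK: "\<bar>l\<bar> * K \<le> 1"
    and c: "p < 1 \<Longrightarrow> \<bar>c\<bar> \<le> K * p"
  shows "measure_pmf.expectation (bernoulli_pmf p) (\<lambda>b. exp (l * c * (of_bool b / p - 1)))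
           \<le> exp (l\<^sup>2 * \<bar>c\<bar> * K)"
proof -
  define x1 where "x1 = l * c * (1 / p - 1)"
  define x0 where "x0 = - (l * c)"
  have E: "measure_pmf.expectation (bernoulli_pmf p) (\<lambda>b. exp (l * c * (of_bool b / p - 1)))
             = exp x1 * p + exp x0 * (1 - p)"
    using p by (simp add: x1_def x0_def)
  have one_le: "1 \<le> exp (l\<^sup>2 * \<bar>c\<bar> * K)"
    using K by simp
  consider "c = 0 \<or> p = 1" | "0 < p" "p < 1" "\<bar>c\<bar> \<le> K * p"
    using p c by fastforce
  then show ?thesis
  proof cases
    case 1
    then show ?thesis using E one_le by (auto simp: x1_def x0_def)
  next
    case 2
    have lc: "\<bar>l * c\<bar> \<le> p"
    proof -
      have "\<bar>l * c\<bar> \<le> \<bar>l\<bar> * (K * p)"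
        using 2 by (simp add: abs_mult mult_left_mono)
      also have "\<dots> \<le> p"
        using lK 2 by (simp add: mult.assoc[symmetric] mult_left_le_one_le)
      finally show ?thesis .
    qed
    have x1: "x1 = l * c * (1 - p) / p"
      using 2 by (simp add: x1_def field_simps)
    have "\<bar>x1\<bar> \<le> 1 - p"
      using lc 2 by (simp add: x1 abs_mult divide_le_eq mult_right_mono)
    then have "exp x1 \<le> 1 + x1 + x1\<^sup>2"
      using 2 by (intro exp_le_one_plus_sq) auto
    moreover have "exp x0 \<le> 1 + x0 + x0\<^sup>2"
      using lc 2 by (intro exp_le_one_plus_sq) (auto simp: x0_def)
    ultimately have "exp x1 * p + exp x0 * (1 - p)
        \<le> (1 + x1 + x1\<^sup>2) * p + (1 + x0 + x0\<^sup>2) * (1 - p)"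
      using 2 by (intro add_mono mult_right_mono) auto
    also have "\<dots> = 1 + (l * c)\<^sup>2 * (1 - p) / p"
      using 2 by (simp add: x1 x0_def field_simps power2_eq_square)
    also have "\<dots> \<le> 1 + (l * c)\<^sup>2 / p"
      using 2 by (intro add_left_mono divide_right_mono) (auto simp: mult_left_le)
    also have "\<dots> = 1 + l\<^sup>2 * \<bar>c\<bar> * (\<bar>c\<bar> / p)"
      by (simp add: power2_eq_square)
    also have "\<dots> \<le> 1 + l\<^sup>2 * \<bar>c\<bar> * K"
      using 2 by (intro add_left_mono mult_left_mono) (auto simp: divide_le_eq mult.commute)
    also have "\<dots> \<le> exp (l\<^sup>2 * \<bar>c\<bar> * K)"
      by (rule exp_ge_add_one_self)
    finally show ?thesis using E by simp
  qed
qed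

lemma Pi_bernoulli_reweighted_mgf_le:
  fixes A :: "'a set" and p c :: "'a \<Rightarrow> real" and K l :: real
  assumes A: "finite A" and p: "\<And>x. x \<in> A \<Longrightarrow> 0 \<le> p x \<and> p x \<le> 1"
    and K: "0 \<le> K" and lK: "\<bar>l\<bar> * K \<le> 1"
    and c: "\<And>x. x \<in> A \<Longrightarrow> p x < 1 \<Longrightarrow> \<bar>c x\<bar> \<le> K * p x"
    and c_sum: "(\<Sum>x\<in>A. \<bar>c x\<bar>) \<le> 1"
  shows "measure_pmf.expectation (Pi_pmf A False (\<lambda>x. bernoulli_pmf (p x)))
           (\<lambda>\<delta>. exp (l * (\<Sum>x\<in>A. c x * (of_bool (\<delta> x) / p x - 1)))) \<le> exp (l\<^sup>2 * K)"
proof -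
  let ?f = "\<lambda>x b. exp (l * c x * (of_bool b / p x - 1))"
  have "measure_pmf.expectation (Pi_pmf A False (\<lambda>x. bernoulli_pmf (p x)))
          (\<lambda>\<delta>. exp (l * (\<Sum>x\<in>A. c x * (of_bool (\<delta> x) / p x - 1))))
        = measure_pmf.expectation (Pi_pmf A False (\<lambda>x. bernoulli_pmf (p x))) (\<lambda>\<delta>. \<Prod>x\<in>A. ?f x (\<delta> x))"
    using A by (simp add: sum_distrib_left exp_sum mult.assoc)
  also have "\<dots> = (\<Prod>x\<in>A. measure_pmf.expectation (bernoulli_pmf (p x)) (?f x))"
    by (rule expectation_prod_Pi_pmf[OF A]) (auto intro: integrable_measure_pmf_finite)
  also have "\<dots> \<le> (\<Prod>x\<in>A. exp (l\<^sup>2 * \<bar>c x\<bar> * K))"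
    using p c by (intro prod_mono conjI integral_nonneg_AE AE_pmfI bernoulli_reweighted_mgf_le K lK) auto
  also have "\<dots> = exp (l\<^sup>2 * K * (\<Sum>x\<in>A. \<bar>c x\<bar>))"
    using A by (simp add: exp_sum[symmetric] sum_distrib_left mult_ac)
  also have "\<dots> \<le> exp (l\<^sup>2 * K)"
    using c_sum K by (simp add: mult_left_le)
  finally show ?thesis .
qed

lemma Pi_bernoulli_reweighted_tail:
  fixes A :: "'a set" and p c :: "'a \<Rightarrow> real" and K g :: real
  assumes A: "finite A" and p: "\<And>x. x \<in> A \<Longrightarrow> 0 \<le> p x \<and> p x \<le> 1"
    and K: "0 < K"
    and c: "\<And>x. x \<in> A \<Longrightarrow> p x < 1 \<Longrightarrow> \<bar>c x\<bar> \<le> K * p x"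
    and c_sum: "(\<Sum>x\<in>A. \<bar>c x\<bar>) \<le> 1" and g: "0 < g" "g \<le> 2"
  shows "measure_pmf.prob (Pi_pmf A False (\<lambda>x. bernoulli_pmf (p x)))
           {\<delta>. g \<le> \<bar>\<Sum>x\<in>A. c x * (of_bool (\<delta> x) / p x - 1)\<bar>} \<le> 2 * exp (- (g\<^sup>2 / (4 * K)))"
proof -
  let ?M = "Pi_pmf A False (\<lambda>x. bernoulli_pmf (p x))"
  let ?Z = "\<lambda>\<delta>. \<Sum>x\<in>A. c x * (of_bool (\<delta> x) / p x - 1)"
  define l where "l = g / (2 * K)"
  have l: "0 < l" "\<bar>l\<bar> * K \<le> 1" "\<bar>- l\<bar> * K \<le> 1"
    using g K by (auto simp: l_def)
  have exponent: "exp (- l * g) * exp (l\<^sup>2 * K) = exp (- (g\<^sup>2 / (4 * K)))"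
    using K by (simp add: l_def exp_add[symmetric] power2_eq_square field_simps)
  have int: "integrable ?M f" for f :: "_ \<Rightarrow> real"
    using A by (intro integrable_measure_pmf_finite) (simp add: set_Pi_pmf finite_PiE_dflt)
  have set_int: "set_integrable ?M (space ?M) f" for f :: "_ \<Rightarrow> real"
    using int by (simp add: set_integrable_def)
  have set_integral: "(\<integral>\<delta>\<in>space ?M. f \<delta> \<partial>?M) = measure_pmf.expectation ?M f" for f :: "_ \<Rightarrow> real"
    using int by (rule set_integral_space)
  have "measure_pmf.prob ?M {\<delta>. g \<le> ?Z \<delta>}
        \<le> exp (- l * g) * measure_pmf.expectation ?M (\<lambda>\<delta>. exp (l * ?Z \<delta>))"
    using measure_pmf.Chernoff_ineq_ge[OF l(1) set_int, where a = g and f = ?Z]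
    by (simp only: set_integral) simp
  also have "\<dots> \<le> exp (- l * g) * exp (l\<^sup>2 * K)"
    using K by (intro mult_left_mono Pi_bernoulli_reweighted_mgf_le[OF A p _ l(2) c c_sum]) auto
  also have "\<dots> = exp (- (g\<^sup>2 / (4 * K)))"
    by (rule exponent)
  finally have upper: "measure_pmf.prob ?M {\<delta>. g \<le> ?Z \<delta>} \<le> exp (- (g\<^sup>2 / (4 * K)))" .
  have "measure_pmf.prob ?M {\<delta>. ?Z \<delta> \<le> - g}
        \<le> exp (l * - g) * measure_pmf.expectation ?M (\<lambda>\<delta>. exp (- l * ?Z \<delta>))"
    using measure_pmf.Chernoff_ineq_le[OF l(1) set_int, where a = "- g" and f = ?Z]
    by (simp only: set_integral) simp
  also have "\<dots> \<le> exp (l * - g) * exp ((- l)\<^sup>2 * K)"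
    using K by (intro mult_left_mono Pi_bernoulli_reweighted_mgf_le[OF A p _ l(3) c c_sum]) auto
  also have "\<dots> = exp (- (g\<^sup>2 / (4 * K)))"
    using exponent by simp
  finally have lower: "measure_pmf.prob ?M {\<delta>. ?Z \<delta> \<le> - g} \<le> exp (- (g\<^sup>2 / (4 * K)))" .
  have "measure_pmf.prob ?M {\<delta>. g \<le> \<bar>?Z \<delta>\<bar>}
        \<le> measure_pmf.prob ?M ({\<delta>. g \<le> ?Z \<delta>} \<union> {\<delta>. ?Z \<delta> \<le> - g})"
    by (intro measure_pmf.finite_measure_mono) auto
  also have "\<dots> \<le> measure_pmf.prob ?M {\<delta>. g \<le> ?Z \<delta>} + measure_pmf.prob ?M {\<delta>. ?Z \<delta> \<le> - g}"
    by (rule measure_Un_le) auto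
  finally show ?thesis using upper lower by simp
qed

lemma abs_le_one_if_sum_squares_le_one:
  fixes f :: "'a \<Rightarrow> real"
  assumes "finite A" "a \<in> A" "(\<Sum>x\<in>A. (f x)\<^sup>2) \<le> 1"
  shows "\<bar>f a\<bar> \<le> 1"
proof -
  have "(f a)\<^sup>2 \<le> 1"
    using member_le_sum[of a A "\<lambda>x. (f x)\<^sup>2"] assms by simp
  then show ?thesis
    by (simp add: abs_square_le_1)
qed

lemma sum_cube_slice:
  fixes g :: "nat \<Rightarrow> nat \<Rightarrow> nat \<Rightarrow> real"
  assumes "i < n"
  shows "(\<Sum>(a, j, k)\<in>{..<n} \<times> {..<n} \<times> {..<n}. of_bool (a = i) * g a j k) = (\<Sum>j<n. \<Sum>k<n. g i j k)"
proof -
  have "(\<Sum>(a, j, k)\<in>{..<n} \<times> {..<n} \<times> {..<n}. of_bool (a = i) * g a j k)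
        = (\<Sum>a<n. of_bool (a = i) * (\<Sum>j<n. \<Sum>k<n. g a j k))"
    by (simp only: sum.cartesian_product[symmetric] prod.case sum_distrib_left)
  also have "\<dots> = (\<Sum>j<n. \<Sum>k<n. g i j k)"
    using assms by simp
  finally show ?thesis .
qed

lemma abs_le_rownorm:
  assumes "q < r"
  shows "\<bar>Us a q\<bar> \<le> rownorm r Us a"
proof -
  have "(Us a q)\<^sup>2 \<le> (\<Sum>l<r. (Us a l)\<^sup>2)"
    using assms by (intro member_le_sum) auto
  then show ?thesis
    unfolding rownorm_def by (metis real_sqrt_abs real_sqrt_le_mono)
qed

lemma Ssum_pos:
  assumes "q < r" and "(\<Sum>a<n. (Us a q)\<^sup>2) = 1"
  shows "0 < Ssum n r Us"
proof -
  obtain a where a: "a < n" "Us a q \<noteq> 0"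
    using assms(2) by (metis (no_types, lifting) lessThan_iff sum.neutral zero_neq_one zero_power2)
  then have "0 < rownorm r Us a powr (3/2)"
    using abs_le_rownorm[OF assms(1), of Us a] by simp
  also have "\<dots> \<le> Ssum n r Us"
    unfolding Ssum_def using a(1) by (intro member_le_sum) auto
  finally show ?thesis .
qed

lemma pprob_nonneg: "0 \<le> pprob n r Us i j k"
  unfolding pprob_def by (intro divide_nonneg_nonneg add_nonneg_nonneg mult_nonneg_nonneg) auto

lemma abs_mult_le_sqrt2_powr:
  fixes u v \<rho> :: real
  assumes "\<bar>u\<bar> \<le> 1" "\<bar>u\<bar> \<le> 2 * \<rho>" "\<bar>v\<bar> \<le> \<rho>"
  shows "\<bar>u * v\<bar> \<le> sqrt 2 * \<rho> powr (3/2)"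
proof -
  have \<rho>: "0 \<le> \<rho>"
    using assms(3) by linarith
  have "\<bar>u\<bar> = sqrt (\<bar>u\<bar> * \<bar>u\<bar>)"
    by simp
  also have "\<dots> \<le> sqrt (1 * (2 * \<rho>))"
    using assms by (intro real_sqrt_le_mono mult_mono) auto
  finally have "\<bar>u\<bar> * \<bar>v\<bar> \<le> sqrt (2 * \<rho>) * \<rho>"
    using assms(3) by (intro mult_mono) auto
  also have "\<dots> = sqrt 2 * \<rho> powr (3/2)"
    using powr_mult_base[OF \<rho>, of "1/2"] powr_half_sqrt[OF \<rho>] by (simp add: real_sqrt_mult mult.commute)
  finally show ?thesis
    by (simp add: abs_mult)
qed

lemma slice_coefficient_le_pprob:
  assumes "0 < n" "0 < Ssum n r Us" "q < r"
    and "\<bar>U j q\<bar> \<le> 1" "\<bar>U j q\<bar> \<le> 2 * rownorm r Us j"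
    and "\<bar>U k q\<bar> \<le> 1" "\<bar>U k q\<bar> \<le> 2 * rownorm r Us k"
  shows "\<bar>U j q * Us j q * (U k q * Us k q)\<bar> \<le> 6 * real n * (Ssum n r Us)\<^sup>2 * pprob n r Us i j k"
proof -
  let ?P = "\<lambda>a. rownorm r Us a powr (3/2)"
  have "\<bar>U j q * Us j q * (U k q * Us k q)\<bar> \<le> (sqrt 2 * ?P j) * (sqrt 2 * ?P k)"
    unfolding abs_mult[of "U j q * Us j q"] using assms
    by (intro mult_mono abs_mult_le_sqrt2_powr abs_le_rownorm) auto
  also have "\<dots> = 2 * (?P j * ?P k)"
    by simp
  also have "\<dots> \<le> 2 * (?P i * ?P j + ?P j * ?P k + ?P k * ?P i)"
    by (simp add: add_increasing add_increasing2)
  also have "\<dots> = 6 * real n * (Ssum n r Us)\<^sup>2 * pprob n r Us i j k"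
    unfolding pprob_def using assms(1,2) by simp
  finally show ?thesis .
qed

text \<open>The case \<open>phat = 0\<close>, where \<open>Wgt = 0\<close>, is covered by \<open>1 / 0 = 0\<close>.\<close>

lemma Wgt_eq_inverse_phat:
  assumes "0 \<le> m"
  shows "Wgt m n r Us i j k = 1 / phat m n r Us i j k"
proof -
  have "0 \<le> phat m n r Us i j k"
    using assms pprob_nonneg[of n r Us i j k] by (simp add: phat_def)
  then show ?thesis
    by (auto simp: Wgt_def)
qed

definition slice_weight ::
  "nat \<Rightarrow> nat \<Rightarrow> (nat \<Rightarrow> nat \<Rightarrow> real) \<Rightarrow> (nat \<Rightarrow> nat \<Rightarrow> real) \<Rightarrow> nat \<times> nat \<times> nat \<Rightarrow> real" where
  "slice_weight i q U Us = (\<lambda>(a, j, k). of_bool (a = i) * (U j q * Us j q * (U k q * Us k q)))"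

lemma slice_weight_abs_sum_le:
  assumes "i < n" "(\<Sum>a<n. (U a q)\<^sup>2) = 1" "(\<Sum>a<n. (Us a q)\<^sup>2) = 1"
  shows "(\<Sum>x\<in>{..<n} \<times> {..<n} \<times> {..<n}. \<bar>slice_weight i q U Us x\<bar>) \<le> 1"
proof -
  have "(\<Sum>x\<in>{..<n} \<times> {..<n} \<times> {..<n}. \<bar>slice_weight i q U Us x\<bar>)
        = (\<Sum>(a, j, k)\<in>{..<n} \<times> {..<n} \<times> {..<n}. of_bool (a = i) * (\<bar>U j q * Us j q\<bar> * \<bar>U k q * Us k q\<bar>))"
    by (intro sum.cong) (auto simp: slice_weight_def abs_mult)
  also have "\<dots> = (\<Sum>a<n. \<bar>U a q\<bar> * \<bar>Us a q\<bar>)\<^sup>2"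
    using assms(1) by (simp add: sum_cube_slice power2_eq_square sum_product abs_mult)
  also have "\<dots> \<le> (\<Sum>a<n. \<bar>U a q\<bar>\<^sup>2) * (\<Sum>a<n. \<bar>Us a q\<bar>\<^sup>2)"
    by (rule Cauchy_Schwarz_ineq_sum)
  also have "\<dots> = 1"
    using assms(2,3) by simp
  finally show ?thesis .
qed

lemma slice_weight_le_phat:
  assumes "0 < m" "q < r" "i < n" "j < n" "k < n"
    and Us_col: "(\<Sum>a<n. (Us a q)\<^sup>2) = 1" and U_col: "(\<Sum>a<n. (U a q)\<^sup>2) = 1"
    and U_bound: "\<And>a. a < n \<Longrightarrow> \<bar>U a q\<bar> \<le> 2 * rownorm r Us a"
    and "phat m n r Us a j k < 1"
  shows "\<bar>slice_weight i q U Us (a, j, k)\<bar> \<le> 6 * real n * (Ssum n r Us)\<^sup>2 / m * phat m n r Us a j k"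
proof (cases "a = i")
  case True
  have "\<bar>U l q\<bar> \<le> 1" if "l < n" for l
    using U_col that abs_le_one_if_sum_squares_le_one[of "{..<n}" l "\<lambda>a. U a q"] by simp
  then have "\<bar>U j q * Us j q * (U k q * Us k q)\<bar> \<le> 6 * real n * (Ssum n r Us)\<^sup>2 * pprob n r Us i j k"
    using assms(2-5) U_bound Ssum_pos[where Us = Us and n = n, OF assms(2) Us_col]
    by (intro slice_coefficient_le_pprob) auto
  moreover have "phat m n r Us a j k = m * pprob n r Us a j k"
    using assms(9) by (simp add: phat_def)
  ultimately show ?thesis
    using True assms(1) by (simp add: slice_weight_def)
next
  case False
  have "0 \<le> phat m n r Us a j k"
    using assms(1) pprob_nonneg[of n r Us a j k] by (simp add: phat_def)
  then show ?thesis
    using False assms(1) by (simp add: slice_weight_def)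
qed

lemma sampled_error_eq_reweighted_sum:
  assumes "0 \<le> m" "i < n"
  shows "(\<Sum>j<n. \<Sum>k<n. (if \<delta> (i,j,k) then 1 else 0) * Wgt m n r Us i j k
            * U j q * Us j q * U k q * Us k q) - (\<Sum>a<n. U a q * Us a q)\<^sup>2
         = (\<Sum>x\<in>{..<n} \<times> {..<n} \<times> {..<n}.
              slice_weight i q U Us x * (of_bool (\<delta> x) / (case x of (a, j, k) \<Rightarrow> phat m n r Us a j k) - 1))"
proof -
  have "(\<Sum>x\<in>{..<n} \<times> {..<n} \<times> {..<n}.
          slice_weight i q U Us x * (of_bool (\<delta> x) / (case x of (a, j, k) \<Rightarrow> phat m n r Us a j k) - 1))
        = (\<Sum>(a, j, k)\<in>{..<n} \<times> {..<n} \<times> {..<n}. of_bool (a = i)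
            * (U j q * Us j q * (U k q * Us k q) * (of_bool (\<delta> (a, j, k)) / phat m n r Us a j k - 1)))"
    by (intro sum.cong) (auto simp: slice_weight_def)
  also have "\<dots> = (\<Sum>j<n. \<Sum>k<n. U j q * Us j q * (U k q * Us k q)
                     * (of_bool (\<delta> (i, j, k)) / phat m n r Us i j k - 1))"
    using assms(2) by (rule sum_cube_slice)
  also have "\<dots> = (\<Sum>j<n. \<Sum>k<n. (if \<delta> (i,j,k) then 1 else 0) * Wgt m n r Us i j k
                     * U j q * Us j q * U k q * Us k q) - (\<Sum>a<n. U a q * Us a q)\<^sup>2"
    using assms(1) by (simp add: Wgt_eq_inverse_phat of_bool_def right_diff_distrib sum_subtractf
        power2_eq_square sum_product mult_ac)
  finally show ?thesis ..
qed

lemma delta_pmf_sampled_error_concentration: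
  assumes Us_col: "(\<Sum>a<n. (Us a q)\<^sup>2) = 1" and U_col: "(\<Sum>a<n. (U a q)\<^sup>2) = 1"
    and U_bound: "\<And>a. a < n \<Longrightarrow> \<bar>U a q\<bar> \<le> 2 * rownorm r Us a"
    and q: "q < r" and i: "i < n" and m: "0 < m" and \<gamma>: "0 < \<gamma>" "\<gamma> \<le> 2"
  shows "1 - 2 * exp (- (\<gamma>\<^sup>2 * m / (24 * real n * (Ssum n r Us)\<^sup>2)))
           \<le> measure_pmf.prob (delta_pmf m n r Us)
               {\<delta>. \<bar>(\<Sum>j<n. \<Sum>k<n. (if \<delta> (i,j,k) then 1 else 0) * Wgt m n r Us i j k
                       * U j q * Us j q * U k q * Us k q) - (\<Sum>a<n. U a q * Us a q)\<^sup>2\<bar> \<le> \<gamma>}"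
    (is "_ \<le> measure_pmf.prob _ {\<delta>. \<bar>?err \<delta>\<bar> \<le> \<gamma>}")
proof -
  let ?A = "{..<n} \<times> {..<n} \<times> {..<n}"
  define K where "K = 6 * real n * (Ssum n r Us)\<^sup>2 / m"
  define p where "p = (\<lambda>(a, j, k). phat m n r Us a j k)"
  let ?M = "Pi_pmf ?A False (\<lambda>x. bernoulli_pmf (p x))"
  let ?Z = "\<lambda>\<delta>. \<Sum>x\<in>?A. slice_weight i q U Us x * (of_bool (\<delta> x) / p x - 1)"
  have K: "0 < K"
    using i m Ssum_pos[where Us = Us and n = n, OF q Us_col] by (simp add: K_def)
  have M: "delta_pmf m n r Us = ?M"
    unfolding delta_pmf_def p_def by (intro Pi_pmf_cong) auto
  have p: "0 \<le> p x \<and> p x \<le> 1" for x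
    using m pprob_nonneg by (auto simp: p_def phat_def split: prod.splits)
  have c: "\<bar>slice_weight i q U Us x\<bar> \<le> K * p x" if xA: "x \<in> ?A" and px: "p x < 1" for x
  proof -
    obtain a j k where x: "x = (a, j, k)" "j < n" "k < n"
      using xA by auto
    then show ?thesis
      using px slice_weight_le_phat[where Us = Us and U = U, OF m q i x(2,3) Us_col U_col U_bound]
      by (simp add: K_def p_def)
  qed
  have "measure_pmf.prob ?M {\<delta>. \<gamma> \<le> \<bar>?Z \<delta>\<bar>} \<le> 2 * exp (- (\<gamma>\<^sup>2 / (4 * K)))"
    using p c slice_weight_abs_sum_le[where U = U and Us = Us, OF i U_col Us_col] \<gamma> K
    by (intro Pi_bernoulli_reweighted_tail) auto
  also have "\<gamma>\<^sup>2 / (4 * K) = \<gamma>\<^sup>2 * m / (24 * real n * (Ssum n r Us)\<^sup>2)"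
    by (simp add: K_def)
  finally have tail: "measure_pmf.prob ?M {\<delta>. \<gamma> \<le> \<bar>?Z \<delta>\<bar>}
                        \<le> 2 * exp (- (\<gamma>\<^sup>2 * m / (24 * real n * (Ssum n r Us)\<^sup>2)))" .
  have "?err \<delta> = ?Z \<delta>" for \<delta>
    unfolding p_def using m i by (intro sampled_error_eq_reweighted_sum) auto
  then have event: "{\<delta>. \<bar>?err \<delta>\<bar> \<le> \<gamma>} = space ?M - {\<delta>. \<gamma> < \<bar>?Z \<delta>\<bar>}"
    by auto
  have "measure_pmf.prob ?M {\<delta>. \<bar>?err \<delta>\<bar> \<le> \<gamma>} = 1 - measure_pmf.prob ?M {\<delta>. \<gamma> < \<bar>?Z \<delta>\<bar>}"
    unfolding event by (rule measure_pmf.prob_compl) simp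
  also have "\<dots> \<ge> 1 - measure_pmf.prob ?M {\<delta>. \<gamma> \<le> \<bar>?Z \<delta>\<bar>}"
    by (intro diff_left_mono measure_pmf.finite_measure_mono) auto
  finally show ?thesis
    using M tail by simp
qed

lemma two_exp_neg_le_powr:
  fixes x t :: real
  assumes "2 \<le> x" "11 * ln x \<le> t"
  shows "2 * exp (- t) \<le> x powr (-10)"
proof -
  have "2 * exp (- t) \<le> 2 * exp (- (11 * ln x))"
    using assms(2) by simp
  also have "\<dots> = 2 * (x powr (-1) * x powr (-10))"
    using assms(1) by (simp add: powr_def exp_add[symmetric])
  also have "\<dots> = (2 / x) * x powr (-10)"
    using assms(1) by (simp add: powr_minus_divide)
  also have "\<dots> \<le> x powr (-10)"
    using assms(1) by (intro mult_left_le_one_le) auto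
  finally show ?thesis .
qed

lemma sample_size_exponent:
  fixes x S \<gamma> m :: real
  assumes x: "2 \<le> x" and S: "0 < S" and \<gamma>: "0 < \<gamma>"
    and m: "264 / \<gamma>\<^sup>2 * x * ln x * S\<^sup>2 \<le> m"
  shows "0 < m" and "2 * exp (- (\<gamma>\<^sup>2 * m / (24 * x * S\<^sup>2))) \<le> x powr (-10)"
proof -
  have "0 < 264 / \<gamma>\<^sup>2 * x * ln x * S\<^sup>2"
    using x S \<gamma> by simp
  then show "0 < m"
    using m by linarith
  have "11 * ln x = \<gamma>\<^sup>2 / (24 * x * S\<^sup>2) * (264 / \<gamma>\<^sup>2 * x * ln x * S\<^sup>2)"
    using x S \<gamma> by (simp add: field_simps)
  also have "\<dots> \<le> \<gamma>\<^sup>2 / (24 * x * S\<^sup>2) * m"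
    using m x by (intro mult_left_mono) auto
  finally show "2 * exp (- (\<gamma>\<^sup>2 * m / (24 * x * S\<^sup>2))) \<le> x powr (-10)"
    using x by (intro two_exp_neg_le_powr) auto
qed

lemma delta_pmf_sampled_error_whp:
  assumes Us_col: "(\<Sum>a<n. (Us a q)\<^sup>2) = 1" and U_col: "(\<Sum>a<n. (U a q)\<^sup>2) = 1"
    and U_bound: "\<And>a. a < n \<Longrightarrow> \<bar>U a q\<bar> \<le> 2 * rownorm r Us a"
    and q: "q < r" and i: "i < n" and \<gamma>: "0 < \<gamma>" "\<gamma> \<le> 2"
    and m: "264 / \<gamma>\<^sup>2 * real n * ln (real n) * (Ssum n r Us)\<^sup>2 \<le> m"
  shows "1 - real n powr (-10) \<le> measure_pmf.prob (delta_pmf m n r Us)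
           {\<delta>. \<bar>(\<Sum>j<n. \<Sum>k<n. (if \<delta> (i,j,k) then 1 else 0) * Wgt m n r Us i j k
                   * U j q * Us j q * U k q * Us k q) - (\<Sum>a<n. U a q * Us a q)\<^sup>2\<bar> \<le> \<gamma>}"
proof (cases "n = 1")
  case True
  then show ?thesis
    by simp
next
  case False
  then have n: "2 \<le> real n"
    using i by linarith
  have S: "0 < Ssum n r Us"
    using Ssum_pos[where Us = Us and n = n, OF q Us_col] .
  show ?thesis
    using delta_pmf_sampled_error_concentration[where Us = Us and U = U, OF Us_col U_col U_bound q i
        sample_size_exponent(1)[OF n S \<gamma>(1) m] \<gamma>]
      sample_size_exponent(2)[OF n S \<gamma>(1) m]
    by linarith
qed

theorem mainTheorem5:
  "\<exists>C::real. C > 0 \<and>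
    (\<forall>(n::nat) (r::nat) (Us::nat \<Rightarrow> nat \<Rightarrow> real) (U::nat \<Rightarrow> nat \<Rightarrow> real)
       (\<gamma>::real) (i::nat) (q::nat) (m::real).
      (\<forall>l<r. \<forall>l'<r. (\<Sum>a<n. Us a l * Us a l') = (if l = l' then 1 else 0)) \<longrightarrow>
      (\<forall>l<r. (\<Sum>a<n. (U a l)^2) = 1) \<longrightarrow>
      (\<forall>a<n. \<forall>l<r. \<bar>U a l\<bar> \<le> 2 * rownorm r Us a) \<longrightarrow>
      0 < \<gamma> \<longrightarrow> \<gamma> \<le> 1 \<longrightarrow> i < n \<longrightarrow> q < r \<longrightarrow>
      m \<ge> C / \<gamma>^2 * real n * ln (real n) * (Ssum n r Us)^2 \<longrightarrow>
      measure_pmf.prob (delta_pmf m n r Us)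
        {\<delta>. \<bar>(\<Sum>j<n. \<Sum>k<n. (if \<delta> (i,j,k) then 1 else 0) * Wgt m n r Us i j k
                 * U j q * Us j q * U k q * Us k q)
              - (\<Sum>a<n. U a q * Us a q)^2\<bar> \<le> \<gamma>}
        \<ge> 1 - real n powr (-10))"
  by (intro exI[of _ 264] conjI allI impI delta_pmf_sampled_error_whp)
    (auto simp: power2_eq_square)

end
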